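(* Let $\varphi(\bm x,\bm y,\bm z)$ be the conjunction $\bigwedge_{i=1}^n \bm r_i^\top\bm x<\bm s_i^\top\bm y+\bm t_i^\top\bm z+h_i\ \wedge\ \bigwedge_{j=1}^m \bm u_j^\top\bm x\approx^j_{e_j}\bm v_j^\top\bm y+\bm w_j^\top\bm z+d_j$ as in the context, and let $\bm c$ be an integer vector. Then $\exists^{\mathsf{ram}}\bm x,\bm y\colon\varphi(\bm x,\bm y,\bm c)$ holds over $\mathbb{Z}$ if and only if there exists an admissible profile $\bm p\in\mathbb{Z}_\omega^{2n}$ such that some sequence is compatible with $\bm p$ for $\bm c$.
   Context: All vectors $\bm r_i,\bm s_i,\bm t_i,\bm u_j,\bm v_j,\bm w_j$ are integer vectors, $h_i,d_j\in\mathbb{Z}$, $e_j>0$, and each $\approx^j_{e_j}$ is either $\equiv_{e_j}$ or $\not\equiv_{e_j}$, where $s\equiv_e t$ means $e\mid s-t$. Let $\mathbb{Z}_\omega=\mathbb{Z}\cup\{\omega\}$ with $\omega$ larger than all integers. A profile is a vector $\bm p=(p_1,\dots,p_{2n})\in\mathbb{Z}_\omega^{2n}$. For an integer vector $\bm c$, a sequence $\bm a_1,\bm a_2,\dots$ of pairwise distinct integer vectors is compatible with $\bm p$ for $\bm c$ if for all $k<\ell$ and all $j$, $\bm u_j^\top\bm a_k\approx^j_{e_j}\bm v_j^\top\bm a_\ell+\bm w_j^\top\bm c+d_j$, and for all $i\in[1,n]$: $\sup\{\bm r_i^\top\bm a_k\mid k\ge1\}\le p_{2i-1}$ and $p_{2i}\le\liminf\{\bm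 s_i^\top\bm a_k+\bm t_i^\top\bm c+h_i\mid k\ge1\}$ (where sup/liminf equal to $+\infty$ is identified with $\omega$). A profile is admissible if for every $i\in[1,n]$, $p_{2i-1}<p_{2i}$ or $p_{2i}=\omega$. Ramsey quantifier: $\exists^{\mathsf{ram}}\bm x,\bm y\colon\varphi(\bm x,\bm y,\bm c)$ holds iff there is an infinite sequence of pairwise distinct integer vectors $(\bm a_i)_{i\ge1}$ with $\varphi(\bm a_i,\bm a_j,\bm c)$ for all $i<j$. *)

theory Defs
  imports "HOL-Analysis.Analysis" "HOL-Library.Extended_Real"
begin

definition idot :: "int ^ 'd \<Rightarrow> int ^ 'd \<Rightarrow> int" where
  "idot r a = (\<Sum>i\<in>UNIV. r $ i * a $ i)"

definition approx_rel :: "bool \<Rightarrow> int \<Rightarrow> int \<Rightarrow> int \<Rightarrow> bool" where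
  "approx_rel iscong e s t = (if iscong then e dvd (s - t) else \<not> e dvd (s - t))"

datatype zomega = Fin int | Omega

fun zo :: "zomega \<Rightarrow> ereal" where
  "zo (Fin k) = ereal (of_int k)"
| "zo Omega = \<infinity>"

definition phi ::
  "nat \<Rightarrow> (nat \<Rightarrow> int ^ 'd) \<Rightarrow> (nat \<Rightarrow> int ^ 'd) \<Rightarrow> (nat \<Rightarrow> int ^ 'k) \<Rightarrow> (nat \<Rightarrow> int) \<Rightarrow>
   nat \<Rightarrow> (nat \<Rightarrow> int ^ 'd) \<Rightarrow> (nat \<Rightarrow> int ^ 'd) \<Rightarrow> (nat \<Rightarrow> int ^ 'k) \<Rightarrow> (nat \<Rightarrow> int) \<Rightarrow>
   (nat \<Rightarrow> int) \<Rightarrow> (nat \<Rightarrow> bool) \<Rightarrow>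
   int ^ 'd \<Rightarrow> int ^ 'd \<Rightarrow> int ^ 'k \<Rightarrow> bool" where
  "phi n r s t h m u v w d e cg x y z \<longleftrightarrow>
     (\<forall>i\<in>{1..n}. idot (r i) x < idot (s i) y + idot (t i) z + h i) \<and>
     (\<forall>j\<in>{1..m}. approx_rel (cg j) (e j) (idot (u j) x) (idot (v j) y + idot (w j) z + d j))"

definition ramsey_exists :: "(int ^ 'd \<Rightarrow> int ^ 'd \<Rightarrow> bool) \<Rightarrow> bool" where
  "ramsey_exists P \<longleftrightarrow> (\<exists>a :: nat \<Rightarrow> int ^ 'd. inj a \<and> (\<forall>i j. i < j \<longrightarrow> P (a i) (a j)))"

definition admissible :: "nat \<Rightarrow> (nat \<Rightarrow> zomega) \<Rightarrow> bool" where
  "admissible n p \<longleftrightarrow>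
     (\<forall>i\<in>{1..n}. zo (p (2*i - 1)) < zo (p (2*i)) \<or> p (2*i) = Omega)"

text \<open>Compatibility of a sequence with a profile for c. Sup and liminf are taken in the
  extended reals, where +infinity plays the role of omega.\<close>
definition compatible ::
  "nat \<Rightarrow> (nat \<Rightarrow> int ^ 'd) \<Rightarrow> (nat \<Rightarrow> int ^ 'd) \<Rightarrow> (nat \<Rightarrow> int ^ 'k) \<Rightarrow> (nat \<Rightarrow> int) \<Rightarrow>
   nat \<Rightarrow> (nat \<Rightarrow> int ^ 'd) \<Rightarrow> (nat \<Rightarrow> int ^ 'd) \<Rightarrow> (nat \<Rightarrow> int ^ 'k) \<Rightarrow> (nat \<Rightarrow> int) \<Rightarrow>
   (nat \<Rightarrow> int) \<Rightarrow> (nat \<Rightarrow> bool) \<Rightarrow>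
   int ^ 'k \<Rightarrow> (nat \<Rightarrow> zomega) \<Rightarrow> (nat \<Rightarrow> int ^ 'd) \<Rightarrow> bool" where
  "compatible n r s t h m u v w d e cg c p a \<longleftrightarrow>
     inj a \<and>
     (\<forall>k l. k < l \<longrightarrow> (\<forall>j\<in>{1..m}.
        approx_rel (cg j) (e j) (idot (u j) (a k)) (idot (v j) (a l) + idot (w j) c + d j))) \<and>
     (\<forall>i\<in>{1..n}.
        (SUP k. ereal (of_int (idot (r i) (a k)))) \<le> zo (p (2*i - 1)) \<and>
        zo (p (2*i)) \<le> liminf (\<lambda>k. ereal (of_int (idot (s i) (a k) + idot (t i) c + h i))))"

end

theory Submission
  imports Defs
begin

text \<open>A Ramsey sequence only needs each strict inequality r x < s y + t c + h to hold for the
  later elements y: for a fixed x this says that the integers s y + t c + h eventually exceed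
  r x, i.e. r x lies below their liminf. Conversely, if every r a_k lies below that liminf, a
  greedy subsequence restores the inequality for all pairs, and congruence conditions between
  pairs survive passing to subsequences. Over the integers, "every r a_k lies below the liminf"
  is exactly what an admissible profile records: either sup r a_k is a finite maximum M and
  (M, M+1) separates it from the liminf, or r a_k is unbounded and the liminf is omega.\<close>

lemma int_cSup_mem:
  fixes X :: "int set"
  assumes "X \<noteq> {}" "bdd_above X"
  shows "Sup X \<in> X"
proof -
  obtain x where x: "x \<in> X" "Sup X - 1 < x"
    using less_cSupE[OF _ assms(1), of "Sup X - 1"] by auto
  moreover have "x \<le> Sup X"
    using cSup_upper[OF x(1) assms(2)] .
  ultimately have "x = Sup X"
    by linarith
  with x(1) show ?thesis
    by simp
qed

lemma eventually_pairwise_subseq: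
  fixes Q :: "nat \<Rightarrow> nat \<Rightarrow> bool"
  assumes ev: "\<And>k. eventually (Q k) sequentially"
  obtains f :: "nat \<Rightarrow> nat" where "strict_mono f" "\<And>k l. k < l \<Longrightarrow> Q (f k) (f l)"
proof -
  define N where "N k = (SOME N. \<forall>l\<ge>N. Q k l)" for k
  have N: "Q k l" if "N k \<le> l" for k l
    using someI_ex[OF ev[of k, unfolded eventually_sequentially]] that
    unfolding N_def by blast
  define M where "M n = Max (N ` {..n})" for n
  have NM: "N k \<le> M n" if "k \<le> n" for k n
    unfolding M_def using that by (intro Max_ge) auto
  define f where "f = rec_nat 0 (\<lambda>_ x. max (Suc x) (M x))"
  have f_Suc: "f (Suc n) = max (Suc (f n)) (M (f n))" for n
    by (simp add: f_def)
  have mono: "strict_mono f"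
    unfolding strict_mono_Suc_iff f_Suc by (simp add: less_max_iff_disj)
  have "Q (f k) (f (Suc l))" if "k \<le> l" for k l
  proof (rule N)
    have "N (f k) \<le> M (f l)"
      using that mono strict_mono_less_eq NM by blast
    also have "\<dots> \<le> f (Suc l)"
      unfolding f_Suc by (rule max.cobounded2)
    finally show "N (f k) \<le> f (Suc l)" .
  qed
  then have "Q (f k) (f l)" if "k < l" for k l
    using that by (cases l) auto
  with mono show ?thesis by (rule that)
qed

lemma ereal_less_liminf_of_later_greater:
  fixes R S :: "nat \<Rightarrow> int"
  assumes "\<And>l. k < l \<Longrightarrow> R k < S l"
  shows "ereal (of_int (R k)) < liminf (\<lambda>l. ereal (of_int (S l)))"
proof -
  have "ereal (of_int (R k + 1)) \<le> ereal (of_int (S l))" if "Suc k \<le> l" for l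
    using assms[of l] that by simp
  then have "\<forall>\<^sub>F l in sequentially. ereal (of_int (R k + 1)) \<le> ereal (of_int (S l))"
    unfolding eventually_sequentially by blast
  then have "ereal (of_int (R k + 1)) \<le> liminf (\<lambda>l. ereal (of_int (S l)))"
    by (rule Liminf_bounded)
  then show ?thesis
    by (rule less_le_trans[rotated]) simp
qed

lemma ramsey_sequence_iff_less_liminf:
  fixes A :: "'a \<Rightarrow> 'a \<Rightarrow> bool" and R S :: "'i \<Rightarrow> 'a \<Rightarrow> int"
  assumes "finite I"
  shows "(\<exists>a :: nat \<Rightarrow> 'a. inj a \<and>
            (\<forall>k l. k < l \<longrightarrow> A (a k) (a l) \<and> (\<forall>i\<in>I. R i (a k) < S i (a l)))) \<longleftrightarrow>
         (\<exists>a :: nat \<Rightarrow> 'a. inj a \<and> (\<forall>k l. k < l \<longrightarrow> A (a k) (a l)) \<and>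
            (\<forall>i\<in>I. \<forall>k. ereal (of_int (R i (a k))) < liminf (\<lambda>l. ereal (of_int (S i (a l))))))"
  (is "?ramsey \<longleftrightarrow> ?liminf")
proof
  assume ?ramsey
  then obtain a :: "nat \<Rightarrow> 'a" where inj: "inj a"
    and a: "\<And>k l. k < l \<Longrightarrow> A (a k) (a l) \<and> (\<forall>i\<in>I. R i (a k) < S i (a l))"
    by blast
  show ?liminf
  proof (intro exI[of _ a] conjI allI impI ballI)
    show "inj a" by (fact inj)
    show "A (a k) (a l)" if "k < l" for k l
      using a[OF that] ..
    show "ereal (of_int (R i (a k))) < liminf (\<lambda>l. ereal (of_int (S i (a l))))"
      if "i \<in> I" for i k
      using a that by (intro ereal_less_liminf_of_later_greater) blast
  qed
next
  assume ?liminf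
  then obtain a :: "nat \<Rightarrow> 'a" where inj: "inj a" and A: "\<And>k l. k < l \<Longrightarrow> A (a k) (a l)"
    and lim: "\<And>i k. i \<in> I \<Longrightarrow> ereal (of_int (R i (a k))) < liminf (\<lambda>l. ereal (of_int (S i (a l))))"
    by blast
  have ev: "\<forall>\<^sub>F l in sequentially. \<forall>i\<in>I. R i (a k) < S i (a l)" for k
  proof (rule eventually_ball_finite[OF \<open>finite I\<close>], rule ballI)
    fix i assume "i \<in> I"
    from less_LiminfD[OF lim[OF this, of k]]
    show "\<forall>\<^sub>F l in sequentially. R i (a k) < S i (a l)"
      by simp
  qed
  obtain f :: "nat \<Rightarrow> nat" where f: "strict_mono f"
    and RS: "\<And>k l. k < l \<Longrightarrow> \<forall>i\<in>I. R i (a (f k)) < S i (a (f l))"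
    using eventually_pairwise_subseq[of "\<lambda>k l. \<forall>i\<in>I. R i (a k) < S i (a l)", OF ev] by blast
  show ?ramsey
  proof (intro exI[of _ "a \<circ> f"] conjI allI impI)
    show "inj (a \<circ> f)"
      using inj f by (simp add: inj_compose strict_mono_imp_inj_on)
    show "A ((a \<circ> f) k) ((a \<circ> f) l)" if "k < l" for k l
      using A f that by (simp add: strict_mono_less)
    show "\<forall>i\<in>I. R i ((a \<circ> f) k) < S i ((a \<circ> f) l)" if "k < l" for k l
      using RS[OF that] by simp
  qed
qed

lemma profile_bounds_exist_iff_less_liminf:
  fixes R S :: "nat \<Rightarrow> int"
  shows "(\<exists>lo hi. (SUP k. ereal (of_int (R k))) \<le> zo lo \<and>
            zo hi \<le> liminf (\<lambda>k. ereal (of_int (S k))) \<and> (zo lo < zo hi \<or> hi = Omega)) \<longleftrightarrow>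
         (\<forall>k. ereal (of_int (R k)) < liminf (\<lambda>l. ereal (of_int (S l))))"
  (is "(\<exists>lo hi. ?sup lo \<and> ?inf hi \<and> _) \<longleftrightarrow> (\<forall>k. _ < ?L)")
proof
  assume "\<exists>lo hi. ?sup lo \<and> ?inf hi \<and> (zo lo < zo hi \<or> hi = Omega)"
  then obtain lo hi where sup: "?sup lo" and inf: "?inf hi" and lohi: "zo lo < zo hi \<or> hi = Omega"
    by blast
  show "\<forall>k. ereal (of_int (R k)) < ?L"
  proof
    fix k
    have "ereal (of_int (R k)) \<le> zo lo"
      using SUP_upper[of k UNIV] sup by (rule order_trans) simp
    then have "ereal (of_int (R k)) < zo hi"
      using lohi by (auto intro: le_less_trans)
    then show "ereal (of_int (R k)) < ?L"
      using inf by (rule less_le_trans)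
  qed
next
  assume below: "\<forall>k. ereal (of_int (R k)) < ?L"
  show "\<exists>lo hi. ?sup lo \<and> ?inf hi \<and> (zo lo < zo hi \<or> hi = Omega)"
  proof (cases "bdd_above (range R)")
    case True
    define M where "M = Sup (range R)"
    obtain k0 where k0: "R k0 = M"
      using int_cSup_mem[OF _ True] unfolding M_def by auto
    have "?sup (Fin M)"
      using cSup_upper[OF _ True] by (auto simp: M_def intro: SUP_least)
    moreover have "?inf (Fin (M + 1))"
    proof -
      have "\<forall>\<^sub>F l in sequentially. M < S l"
        using less_LiminfD[OF below[rule_format, of k0]] k0 by simp
      then have "\<forall>\<^sub>F l in sequentially. ereal (of_int (M + 1)) \<le> ereal (of_int (S l))"
        by (rule eventually_mono) simp
      then show ?thesis
        by (simp add: Liminf_bounded)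
    qed
    ultimately show ?thesis
      by (intro exI[of _ "Fin M"] exI[of _ "Fin (M + 1)"]) simp
  next
    case False
    have "?L = \<infinity>"
    proof (rule ereal_top)
      fix b :: real
      obtain k where "\<lceil>b\<rceil> < R k"
        using False unfolding bdd_above_def by (metis not_le rangeE rangeI)
      then have "ereal b \<le> ereal (of_int (R k))"
        by simp linarith
      with below show "ereal b \<le> ?L"
        by (meson less_imp_le order_trans)
    qed
    then show ?thesis
      by (intro exI[of _ Omega]) simp
  qed
qed

lemma admissible_profile_exists_iff_less_liminf:
  fixes R S :: "nat \<Rightarrow> nat \<Rightarrow> int"
  shows "(\<exists>p. admissible n p \<and> (\<forall>i\<in>{1..n}.
            (SUP k. ereal (of_int (R i k))) \<le> zo (p (2*i - 1)) \<and>
            zo (p (2*i)) \<le> liminf (\<lambda>k. ereal (of_int (S i k))))) \<longleftrightarrow>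
         (\<forall>i\<in>{1..n}. \<forall>k. ereal (of_int (R i k)) < liminf (\<lambda>l. ereal (of_int (S i l))))"
  (is "?profile \<longleftrightarrow> ?below")
proof
  assume ?profile
  then show ?below
    unfolding admissible_def using profile_bounds_exist_iff_less_liminf by blast
next
  assume ?below
  then obtain lo hi where bounds: "\<And>i. i \<in> {1..n} \<Longrightarrow>
      (SUP k. ereal (of_int (R i k))) \<le> zo (lo i) \<and>
      zo (hi i) \<le> liminf (\<lambda>k. ereal (of_int (S i k))) \<and> (zo (lo i) < zo (hi i) \<or> hi i = Omega)"
    unfolding profile_bounds_exist_iff_less_liminf[symmetric] by metis
  define p where "p j = (if odd j then lo ((j + 1) div 2) else hi (j div 2))" for j
  have "p (2*i - 1) = lo i" "p (2*i) = hi i" if "i \<in> {1..n}" for i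
    using that by (auto simp: p_def)
  with bounds show ?profile
    unfolding admissible_def by (intro exI[of _ p]) simp
qed

theorem mainTheorem7:
  fixes n m :: nat
    and r s u v :: "nat \<Rightarrow> int ^ 'd"
    and t w :: "nat \<Rightarrow> int ^ 'k"
    and h d e :: "nat \<Rightarrow> int"
    and cg :: "nat \<Rightarrow> bool"
    and c :: "int ^ 'k"
  assumes "\<forall>j\<in>{1..m}. e j > 0"
  shows "ramsey_exists (\<lambda>x y. phi n r s t h m u v w d e cg x y c) \<longleftrightarrow>
         (\<exists>p. admissible n p \<and> (\<exists>a. compatible n r s t h m u v w d e cg c p a))"
proof -
  let ?A = "\<lambda>x y. \<forall>j\<in>{1..m}. approx_rel (cg j) (e j) (idot (u j) x) (idot (v j) y + idot (w j) c + d j)"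
  let ?R = "\<lambda>i x. idot (r i) x" and ?S = "\<lambda>i y. idot (s i) y + idot (t i) c + h i"
  have "ramsey_exists (\<lambda>x y. phi n r s t h m u v w d e cg x y c) \<longleftrightarrow>
        (\<exists>a :: nat \<Rightarrow> int ^ 'd. inj a \<and>
           (\<forall>k l. k < l \<longrightarrow> ?A (a k) (a l) \<and> (\<forall>i\<in>{1..n}. ?R i (a k) < ?S i (a l))))"
    unfolding ramsey_exists_def phi_def by blast
  also have "\<dots> \<longleftrightarrow> (\<exists>a. inj a \<and> (\<forall>k l. k < l \<longrightarrow> ?A (a k) (a l)) \<and>
      (\<forall>i\<in>{1..n}. \<forall>k. ereal (of_int (?R i (a k))) < liminf (\<lambda>l. ereal (of_int (?S i (a l))))))"
    by (rule ramsey_sequence_iff_less_liminf) simp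
  also have "\<dots> \<longleftrightarrow> (\<exists>p. admissible n p \<and> (\<exists>a. compatible n r s t h m u v w d e cg c p a))"
    unfolding compatible_def admissible_profile_exists_iff_less_liminf[symmetric] by blast
  finally show ?thesis .
qed

end
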